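(* Let $G_m$ be a parametric regulatory network and $\pi$ a finite sequence of transitions in $\Delta(G_m)$, with $\tilde\pi$ the set of its transitions. Then $p^\#(\tilde\pi)\neq\varnothing$ if and only if $p(\tilde\pi)\neq\emptyset$.
   Context: An influence graph is $G=(V,I)$ with $V=\{1,\dots,n\}$, $I\subseteq V\times V$; regulators $n^-(v)=\{u\mid(u,v)\in I\}$. $m\in\mathbb N^n$, $D_v=\{0,\dots,m_v\}$, $G_m=(G,m)$. Regulator states $\Omega_v=\prod_{u\in n^-(v)}D_u$. Parametrisations: $P\in\mathbb P(G_m)=\prod_{\langle v,\omega\rangle,\ \omega\in\Omega_v}D_v$ with coordinates $P_{v,\omega}$, ordered componentwise; $\bot$ is the zero vector, $\top_{v,\omega}=m_v$. A pair $(L,U)$ denotes $\{P\mid L\le P\le U\}$, the empty lattice $\varnothing$ when $L\not\le U$. States $S(G_m)=\prod_vD_v$; $\omega_v(x)$ projects $x$ onto the regulators of $v$. Transitions: $x\xrightarrow{v,+}y$ ($y$ equals $x$ except $y_v=x_v+1\le m_v$), $x\xrightarrow{v,-}y$ ($y_v=x_v-1\ge0$). $\mathcal P_{x\xrightarrow{v,+}y}=\{P\mid P_{v,\omega_v(x)}\ge x_v+1\}$, $\mathcal P_{x\xrightarrow{v,-}y}=\{P\mid P_{v,\omega_v(x)}\le x_v-1\}$; $p(\emptyset)=\mathbb P(G_m)$, $p(T)=\bigcap_{t\in T}\mathcal P_t$. $\nabla_{x\xrightarrow{v,+}y}(L,U)=(\max(L,\bot[(v,\omega_v(x))\leftarrow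 x_v+1]),U)$, $\nabla_{x\xrightarrow{v,-}y}(L,U)=(L,\min(U,\top[(v,\omega_v(x))\leftarrow x_v-1]))$; $p^\#(\emptyset)=(\bot,\top)$, $p^\#(T\cup\{t\})=\nabla_t(p^\#(T))$. *)

theory Defs
  imports Main
begin

text \<open>Influence graph G = (V, I) with V the (finite) vertex type 'v, I a set of edges,
  m the bound vector. Regulator states are represented as functions 'v \<Rightarrow> nat
  that vanish outside the regulators. A parametrisation is a function
  P :: 'v \<Rightarrow> ('v \<Rightarrow> nat) \<Rightarrow> nat whose relevant coordinates are the pairs
  (v, \<omega>) with \<omega> \<in> \<Omega>_v.\<close>

type_synonym 'v regstate = "'v \<Rightarrow> nat"
type_synonym 'v param = "'v \<Rightarrow> 'v regstate \<Rightarrow> nat"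
type_synonym 'v state = "'v \<Rightarrow> nat"

definition regs :: "('v \<times> 'v) set \<Rightarrow> 'v \<Rightarrow> 'v set" where
  "regs I v = {u. (u, v) \<in> I}"

definition Omega :: "('v \<times> 'v) set \<Rightarrow> ('v \<Rightarrow> nat) \<Rightarrow> 'v \<Rightarrow> 'v regstate set" where
  "Omega I m v = {\<omega>. (\<forall>u \<in> regs I v. \<omega> u \<le> m u) \<and> (\<forall>u. u \<notin> regs I v \<longrightarrow> \<omega> u = 0)}"

definition coords :: "('v \<times> 'v) set \<Rightarrow> ('v \<Rightarrow> nat) \<Rightarrow> ('v \<times> 'v regstate) set" where
  "coords I m = {(v, \<omega>). \<omega> \<in> Omega I m v}"

definition params :: "('v \<times> 'v) set \<Rightarrow> ('v \<Rightarrow> nat) \<Rightarrow> 'v param set" where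
  "params I m = {P. (\<forall>(v, \<omega>) \<in> coords I m. P v \<omega> \<le> m v) \<and>
                     (\<forall>v \<omega>. (v, \<omega>) \<notin> coords I m \<longrightarrow> P v \<omega> = 0)}"

definition param_le :: "('v \<times> 'v) set \<Rightarrow> ('v \<Rightarrow> nat) \<Rightarrow> 'v param \<Rightarrow> 'v param \<Rightarrow> bool" where
  "param_le I m P Q \<longleftrightarrow> (\<forall>(v, \<omega>) \<in> coords I m. P v \<omega> \<le> Q v \<omega>)"

definition pbot :: "'v param" where
  "pbot = (\<lambda>v \<omega>. 0)"

definition ptop :: "('v \<times> 'v) set \<Rightarrow> ('v \<Rightarrow> nat) \<Rightarrow> 'v param" where
  "ptop I m = (\<lambda>v \<omega>. if (v, \<omega>) \<in> coords I m then m v else 0)"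

definition pupd :: "'v param \<Rightarrow> 'v \<Rightarrow> 'v regstate \<Rightarrow> nat \<Rightarrow> 'v param" where
  "pupd P v \<omega> k = P(v := (P v)(\<omega> := k))"

definition pmax :: "'v param \<Rightarrow> 'v param \<Rightarrow> 'v param" where
  "pmax P Q = (\<lambda>v \<omega>. max (P v \<omega>) (Q v \<omega>))"

definition pmin :: "'v param \<Rightarrow> 'v param \<Rightarrow> 'v param" where
  "pmin P Q = (\<lambda>v \<omega>. min (P v \<omega>) (Q v \<omega>))"

text \<open>The set {P | L \<le> P \<le> U} denoted by a pair (L,U); it is the empty lattice iff not L \<le> U.\<close>
definition lattice_set :: "('v \<times> 'v) set \<Rightarrow> ('v \<Rightarrow> nat) \<Rightarrow> 'v param \<times> 'v param \<Rightarrow> 'v param set" where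
  "lattice_set I m LU = {P \<in> params I m. param_le I m (fst LU) P \<and> param_le I m P (snd LU)}"

definition lattice_empty :: "('v \<times> 'v) set \<Rightarrow> ('v \<Rightarrow> nat) \<Rightarrow> 'v param \<times> 'v param \<Rightarrow> bool" where
  "lattice_empty I m LU \<longleftrightarrow> \<not> param_le I m (fst LU) (snd LU)"

definition states :: "('v \<Rightarrow> nat) \<Rightarrow> 'v state set" where
  "states m = {x. \<forall>v. x v \<le> m v}"

definition omega_of :: "('v \<times> 'v) set \<Rightarrow> 'v \<Rightarrow> 'v state \<Rightarrow> 'v regstate" where
  "omega_of I v x = (\<lambda>u. if u \<in> regs I v then x u else 0)"

text \<open>Transitions x --v,s--> y, with sign s = True for + and False for -.\<close>
datatype 'v transition = Tr (src: "'v state") (var: 'v) (sgn: bool) (tgt: "'v state")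

definition Delta :: "('v \<Rightarrow> nat) \<Rightarrow> 'v transition set" where
  "Delta m = {Tr x v s y | x v s y. x \<in> states m \<and>
      (if s then x v + 1 \<le> m v \<and> y = x(v := x v + 1)
            else x v \<ge> 1 \<and> y = x(v := x v - 1))}"

definition Ptrans :: "('v \<times> 'v) set \<Rightarrow> ('v \<Rightarrow> nat) \<Rightarrow> 'v transition \<Rightarrow> 'v param set" where
  "Ptrans I m t = (case t of Tr x v s y \<Rightarrow>
     if s then {P \<in> params I m. P v (omega_of I v x) \<ge> x v + 1}
          else {P \<in> params I m. P v (omega_of I v x) + 1 \<le> x v})"

definition p :: "('v \<times> 'v) set \<Rightarrow> ('v \<Rightarrow> nat) \<Rightarrow> 'v transition set \<Rightarrow> 'v param set" where
  "p I m T = params I m \<inter> (\<Inter>t \<in> T. Ptrans I m t)"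

definition nabla :: "('v \<times> 'v) set \<Rightarrow> ('v \<Rightarrow> nat) \<Rightarrow> 'v transition \<Rightarrow>
    'v param \<times> 'v param \<Rightarrow> 'v param \<times> 'v param" where
  "nabla I m t LU = (case t of Tr x v s y \<Rightarrow>
     if s then (pmax (fst LU) (pupd pbot v (omega_of I v x) (x v + 1)), snd LU)
          else (fst LU, pmin (snd LU) (pupd (ptop I m) v (omega_of I v x) (x v - 1))))"

fun p_sharp :: "('v \<times> 'v) set \<Rightarrow> ('v \<Rightarrow> nat) \<Rightarrow> 'v transition list \<Rightarrow> 'v param \<times> 'v param" where
  "p_sharp I m [] = (pbot, ptop I m)"
| "p_sharp I m (t # ts) = nabla I m t (p_sharp I m ts)"

end

theory Submission
  imports Defs
begin

text \<open>Each operator nabla_t tightens a single bound of the pair (L,U), at the coordinate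
  (v, omega_v(x)) read by t, and the parametrisations between the new bounds are exactly
  those between the old bounds that allow t. Hence p#(pi) denotes precisely p(pi);
  and since the lower bound of p#(pi) is itself a parametrisation, that set is
  nonempty exactly when L <= U.\<close>

lemma omega_of_in_coords: "x \<in> states m \<Longrightarrow> (v, omega_of I v x) \<in> coords I m"
  by (auto simp: coords_def Omega_def omega_of_def states_def)

lemma Tr_in_DeltaD:
  assumes "Tr x v s y \<in> Delta m"
  shows "x \<in> states m" and "if s then x v + 1 \<le> m v else 1 \<le> x v"
  using assms by (auto simp: Delta_def split: if_splits)

lemma param_le_pmax_pupd_pbot:
  assumes "(v, \<omega>) \<in> coords I m"
  shows "param_le I m (pmax L (pupd pbot v \<omega> k)) P \<longleftrightarrow> param_le I m L P \<and> k \<le> P v \<omega>"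
  using assms by (auto simp: param_le_def pmax_def pupd_def pbot_def)

lemma param_le_pmin_pupd_ptop:
  assumes "(v, \<omega>) \<in> coords I m" and "P \<in> params I m"
  shows "param_le I m P (pmin U (pupd (ptop I m) v \<omega> k)) \<longleftrightarrow> param_le I m P U \<and> P v \<omega> \<le> k"
  using assms by (auto simp: param_le_def pmin_def pupd_def ptop_def params_def)

lemma lattice_set_bot_top: "lattice_set I m (pbot, ptop I m) = params I m"
  by (auto simp: lattice_set_def param_le_def pbot_def ptop_def params_def)

lemma lattice_set_nabla:
  assumes "t \<in> Delta m"
  shows "lattice_set I m (nabla I m t LU) = lattice_set I m LU \<inter> Ptrans I m t"
proof -
  obtain x v s y where t: "t = Tr x v s y" by (cases t)
  note x_bounds = Tr_in_DeltaD[OF assms[unfolded t]]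
  have c: "(v, omega_of I v x) \<in> coords I m"
    using omega_of_in_coords[OF x_bounds(1)] .
  show ?thesis
  proof (cases s)
    case True
    then show ?thesis
      using param_le_pmax_pupd_pbot[OF c]
      by (auto simp: t nabla_def Ptrans_def lattice_set_def)
  next
    case False
    have "(P v (omega_of I v x) \<le> x v - 1) \<longleftrightarrow> (P v (omega_of I v x) + 1 \<le> x v)" for P :: "'a param"
      using x_bounds(2) False by auto
    with False show ?thesis
      using param_le_pmin_pupd_ptop[OF c]
      by (auto simp: t nabla_def Ptrans_def lattice_set_def)
  qed
qed

theorem lattice_set_p_sharp:
  assumes "set \<pi> \<subseteq> Delta m"
  shows "lattice_set I m (p_sharp I m \<pi>) = p I m (set \<pi>)"
  using assms
proof (induction \<pi>)
  case Nil
  then show ?case by (simp add: lattice_set_bot_top p_def)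
next
  case (Cons t ts)
  then show ?case by (auto simp: lattice_set_nabla p_def)
qed

lemma fst_p_sharp_in_params:
  "set \<pi> \<subseteq> Delta m \<Longrightarrow> fst (p_sharp I m \<pi>) \<in> params I m"
proof (induction \<pi>)
  case Nil
  then show ?case by (auto simp: params_def pbot_def)
next
  case (Cons t ts)
  obtain x v s y where t: "t = Tr x v s y" by (cases t)
  note x_bounds = Tr_in_DeltaD[of x v s y m]
  have "(v, omega_of I v x) \<in> coords I m"
    using Cons.prems t x_bounds(1) omega_of_in_coords by auto
  with Cons x_bounds t show ?case
    by (auto simp: nabla_def params_def pmax_def pupd_def pbot_def)
qed

lemma lattice_set_nonempty_iff:
  assumes "fst LU \<in> params I m"
  shows "lattice_set I m LU \<noteq> {} \<longleftrightarrow> \<not> lattice_empty I m LU"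
proof
  assume "lattice_set I m LU \<noteq> {}"
  then show "\<not> lattice_empty I m LU"
    by (fastforce simp: lattice_set_def lattice_empty_def param_le_def)
next
  assume "\<not> lattice_empty I m LU"
  then have "fst LU \<in> lattice_set I m LU"
    using assms by (auto simp: lattice_set_def lattice_empty_def param_le_def)
  then show "lattice_set I m LU \<noteq> {}" by blast
qed

theorem corollary1:
  fixes I :: "('v::finite \<times> 'v) set" and m :: "'v \<Rightarrow> nat"
    and \<pi> :: "'v transition list"
  assumes "set \<pi> \<subseteq> Delta m"
  shows "\<not> lattice_empty I m (p_sharp I m \<pi>) \<longleftrightarrow> p I m (set \<pi>) \<noteq> {}"
  using lattice_set_nonempty_iff[OF fst_p_sharp_in_params[OF assms]]
    lattice_set_p_sharp[OF assms]
  by simp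

end
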